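(* Let $m>2$ and $n>0$ be odd integers. Then $\mathcal{C}_m^n=\mathbf{Z}_m^n$.
   Context: $\mathbf{Z}_m$ denotes the integers modulo $m$. $T:\mathbf{Z}_m^n\to\mathbf{Z}_m^n$ is $T(a_0,\dots,a_{n-1})=(a_0+a_1,a_1+a_2,\dots,a_{n-1}+a_0)$. $\mathcal{C}_m^n$ is the set of tuples lying in a cycle of some sequence $(T^k\mathbf{b})_{k\ge0}$, i.e. the set of $\mathbf{a}\in\mathbf{Z}_m^n$ such that $T^P\mathbf{a}=\mathbf{a}$ for some positive integer $P$. *)

theory Defs
  imports Main
begin

definition Zmn :: "int \<Rightarrow> nat \<Rightarrow> int list set" where
  "Zmn m n = {a. length a = n \<and> (\<forall>x\<in>set a. 0 \<le> x \<and> x < m)}"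

definition ducciT :: "int \<Rightarrow> int list \<Rightarrow> int list" where
  "ducciT m a = map (\<lambda>i. (a ! i + a ! ((i + 1) mod length a)) mod m) [0..<length a]"

definition cycleSet :: "int \<Rightarrow> nat \<Rightarrow> int list set" where
  "cycleSet m n = {a \<in> Zmn m n. \<exists>P::nat. P > 0 \<and> (ducciT m ^^ P) a = a}"

end

theory Submission
  imports Defs "HOL-Combinatorics.Permutations"
begin

text \<open>For odd \<open>n\<close> the map \<open>T\<close> is injective on \<open>Z\<^sub>m\<^sup>n\<close>: if \<open>T a = T b\<close>, the difference
  \<open>d = a - b\<close> satisfies \<open>d\<^sub>i \<equiv> -d\<^sub>i\<^sub>+\<^sub>1 (mod m)\<close>, so \<open>d\<^sub>i \<equiv> (-1)\<^sup>i d\<^sub>0\<close>, and closing the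
  cycle of odd length gives \<open>2 d\<^sub>0 \<equiv> 0\<close>, whence \<open>d = 0\<close> because \<open>m\<close> is odd.
  An injective self-map of a finite set permutes it, so every point is periodic.\<close>

lemma funpow_in_set:
  assumes "f ` A \<subseteq> A" "x \<in> A"
  shows "(f ^^ k) x \<in> A"
  using assms by (induction k) auto

lemma inj_on_finite_periodic:
  assumes "finite A" "f ` A \<subseteq> A" "inj_on f A" "x \<in> A"
  obtains n where "n > 0" "(f ^^ n) x = x"
proof -
  define p where "p y = (if y \<in> A then f y else y)" for y
  have "bij_betw f A A"
    unfolding bij_betw_def using assms(3) endo_inj_surj[OF assms(1-3)] by blast
  then have "bij_betw p A A"
    by (rule bij_betw_cong[THEN iffD1, rotated]) (simp add: p_def)
  then have "p permutes A"
    by (rule bij_imp_permutes) (simp add: p_def)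
  then have "permutation p"
    using \<open>finite A\<close> permutation_permutes by blast
  then obtain n where "n > 0" "(p ^^ n) x = x"
    by (rule permutation_self)
  moreover have "(p ^^ k) x = (f ^^ k) x" for k
    using funpow_in_set[OF assms(2,4)] by (induction k) (simp_all add: p_def)
  ultimately show thesis
    using that by simp
qed

lemma dvd_of_dvd_cyclic_pair_sums:
  fixes m :: int and d :: "nat \<Rightarrow> int"
  assumes "odd m" "odd n"
    and pair: "\<And>i. i < n \<Longrightarrow> m dvd d i + d ((i + 1) mod n)"
    and "i < n"
  shows "m dvd d i"
proof -
  have alternating: "m dvd d i - (-1) ^ i * d 0" if "i < n" for i
    using that
  proof (induction i)
    case 0
    then show ?case by simp
  next
    case (Suc i)
    have "m dvd (d i + d (Suc i)) - (d i - (-1) ^ i * d 0)"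
      by (rule dvd_diff) (use pair[of i] Suc in simp_all)
    then show ?case by simp
  qed
  obtain k where k: "n = Suc k" "even k"
    using \<open>odd n\<close> by (cases n) auto
  have "m dvd (d k + d 0) - (d k - d 0)"
    by (rule dvd_diff) (use pair[of k] alternating[of k] k in simp_all)
  then have "m dvd 2 * d 0"
    by simp
  moreover have "coprime m 2"
    using \<open>odd m\<close> by simp
  ultimately have "m dvd d 0"
    by (simp add: coprime_dvd_mult_right_iff)
  have "m dvd (d i - (-1) ^ i * d 0) + (-1) ^ i * d 0"
    by (rule dvd_add) (use alternating[OF \<open>i < n\<close>] \<open>m dvd d 0\<close> in simp_all)
  then show ?thesis
    by simp
qed

lemma residue_eq_of_dvd_diff:
  fixes m x y :: int
  assumes "0 \<le> x" "x < m" "0 \<le> y" "y < m" "m dvd x - y"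
  shows "x = y"
proof -
  have "x mod m = y mod m"
    using \<open>m dvd x - y\<close> by (simp add: mod_eq_dvd_iff)
  then show ?thesis
    using assms by (simp add: mod_pos_pos_trivial)
qed

lemma length_ducciT [simp]: "length (ducciT m a) = length a"
  by (simp add: ducciT_def)

lemma nth_ducciT [simp]:
  "i < length a \<Longrightarrow> ducciT m a ! i = (a ! i + a ! ((i + 1) mod length a)) mod m"
  by (simp add: ducciT_def)

lemma ducciT_Zmn: "m > 0 \<Longrightarrow> a \<in> Zmn m n \<Longrightarrow> ducciT m a \<in> Zmn m n"
  by (auto simp: Zmn_def ducciT_def)

lemma finite_Zmn: "finite (Zmn m n)"
proof (rule finite_subset)
  show "Zmn m n \<subseteq> {xs. set xs \<subseteq> {0..<m} \<and> length xs = n}"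
    by (auto simp: Zmn_def)
  show "finite {xs. set xs \<subseteq> {0..<m} \<and> length xs = n}"
    by (rule finite_lists_length_eq) simp
qed

lemma inj_on_ducciT:
  fixes m :: int
  assumes "odd m" "odd n"
  shows "inj_on (ducciT m) (Zmn m n)"
proof (rule inj_onI)
  fix a b
  assume a: "a \<in> Zmn m n" and b: "b \<in> Zmn m n" and eq: "ducciT m a = ducciT m b"
  have len: "length a = n" "length b = n"
    using a b by (simp_all add: Zmn_def)
  define d where "d i = a ! i - b ! i" for i
  have pair_sums: "m dvd d i + d ((i + 1) mod n)" if "i < n" for i
  proof -
    have "ducciT m a ! i = ducciT m b ! i"
      using eq by simp
    then have "(a ! i + a ! ((i + 1) mod n)) mod m = (b ! i + b ! ((i + 1) mod n)) mod m"
      using that len by simp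
    then have "m dvd (a ! i + a ! ((i + 1) mod n)) - (b ! i + b ! ((i + 1) mod n))"
      by (simp add: mod_eq_dvd_iff)
    then show ?thesis
      by (simp add: d_def algebra_simps)
  qed
  have residue: "0 \<le> c ! i" "c ! i < m" if "c \<in> Zmn m n" "i < n" for c i
    using that nth_mem[of i c] by (auto simp: Zmn_def)
  have "a ! i = b ! i" if "i < n" for i
  proof (rule residue_eq_of_dvd_diff)
    show "m dvd a ! i - b ! i"
      using dvd_of_dvd_cyclic_pair_sums[where d = d, OF assms pair_sums that] by (simp add: d_def)
  qed (use residue a b that in auto)
  then show "a = b"
    using len by (simp add: nth_equalityI)
qed

theorem proposition6p1:
  fixes m :: int and n :: nat
  assumes "m > 2" and "odd m" and "n > 0" and "odd n"
  shows "cycleSet m n = Zmn m n"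
proof
  show "cycleSet m n \<subseteq> Zmn m n"
    by (auto simp: cycleSet_def)
  show "Zmn m n \<subseteq> cycleSet m n"
  proof
    fix a
    assume a: "a \<in> Zmn m n"
    have "ducciT m ` Zmn m n \<subseteq> Zmn m n"
      using \<open>m > 2\<close> ducciT_Zmn by auto
    then obtain P where "P > 0" "(ducciT m ^^ P) a = a"
      using inj_on_finite_periodic[OF finite_Zmn _ inj_on_ducciT a] assms by blast
    then show "a \<in> cycleSet m n"
      using a by (auto simp: cycleSet_def)
  qed
qed

end
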